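(* Let $n\ge1$ and $A=(A_1,\dots,A_n)\in V_n$. The following are equivalent: (i) $A$ is stable; (ii) there exist $1\le j,k,l\le n$ such that $(A_j,A_k,A_l)\in V_3$ is stable; (iii) there exist $1\le j,k,l\le n$ such that $\sigma_{jk}(A)\neq0$ or $\Delta_{jkl}(A)\neq0$; (iv) $A$ is not similar to an upper triangular $n$-matrix; (v) there is no proper nonzero subspace of $\mathbb{C}^2$ preserved by all of $A_1,\dots,A_n$.
   Context: $V_n=(M_{2\times2}(\mathbb{C}))^{\times n}$ with $SL(2,\mathbb{C})$ acting by simultaneous conjugation; a point is stable if its orbit map $g\mapsto g\cdot x$ from $SL(2,\mathbb{C})$ is proper. Similar means in the same $GL(2,\mathbb{C})$-orbit under simultaneous conjugation; an upper triangular $n$-matrix has all components upper triangular. With $t_j=\mathsf{tr}(A_j)$, $t_{jk}=\mathsf{tr}(A_jA_k)$, $t_{jkl}=\mathsf{tr}(A_jA_kA_l)$, define $\tau_{jk}=t_{jk}-\tfrac12t_jt_k$, $\sigma_{jk}=\tau_{jk}^2-\tau_{jj}\tau_{kk}$ and $\Delta_{jkl}=(t_{jkl}-t_{lkj})^2$. *)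

theory Defs
  imports "HOL-Analysis.Analysis"
begin

text \<open>2x2 complex matrices are \<open>complex^2^2\<close>; \<open>A $ i $ j\<close> is the entry in row i, column j.
  The space V_n of n-tuples of such matrices is \<open>complex^2^2^'n\<close> for a finite index type 'n
  with n = CARD('n).\<close>

definition SL2 :: "(complex^2^2) set" where
  "SL2 = {g. det g = 1}"

definition conj_act :: "complex^2^2 \<Rightarrow> complex^2^2^'n \<Rightarrow> complex^2^2^'n" where
  "conj_act g A = (\<chi> i. g ** (A $ i) ** matrix_inv g)"

definition stable :: "complex^2^2^'n \<Rightarrow> bool" where
  "stable A \<longleftrightarrow> proper_map (top_of_set SL2) euclidean (\<lambda>g. conj_act g A)"

definition upper_triangular2 :: "complex^2^2 \<Rightarrow> bool" where
  "upper_triangular2 M \<longleftrightarrow> M $ 2 $ 1 = 0"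

definition similar_to_upper_triangular :: "complex^2^2^'n \<Rightarrow> bool" where
  "similar_to_upper_triangular A \<longleftrightarrow>
     (\<exists>P. invertible P \<and> (\<forall>i. upper_triangular2 (P ** (A $ i) ** matrix_inv P)))"

definition t1 :: "complex^2^2^'n \<Rightarrow> 'n \<Rightarrow> complex" where
  "t1 A j = trace (A $ j)"

definition t2 :: "complex^2^2^'n \<Rightarrow> 'n \<Rightarrow> 'n \<Rightarrow> complex" where
  "t2 A j k = trace (A $ j ** A $ k)"

definition t3 :: "complex^2^2^'n \<Rightarrow> 'n \<Rightarrow> 'n \<Rightarrow> 'n \<Rightarrow> complex" where
  "t3 A j k l = trace (A $ j ** A $ k ** A $ l)"

definition tau :: "complex^2^2^'n \<Rightarrow> 'n \<Rightarrow> 'n \<Rightarrow> complex" where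
  "tau A j k = t2 A j k - t1 A j * t1 A k / 2"

definition sigma :: "complex^2^2^'n \<Rightarrow> 'n \<Rightarrow> 'n \<Rightarrow> complex" where
  "sigma A j k = (tau A j k)^2 - tau A j j * tau A k k"

definition Delta :: "complex^2^2^'n \<Rightarrow> 'n \<Rightarrow> 'n \<Rightarrow> 'n \<Rightarrow> complex" where
  "Delta A j k l = (t3 A j k l - t3 A l k j)^2"

definition triple :: "complex^2^2^'n \<Rightarrow> 'n \<Rightarrow> 'n \<Rightarrow> 'n \<Rightarrow> complex^2^2^3" where
  "triple A j k l = (\<chi> i. if i = 1 then A $ j else if i = 2 then A $ k else A $ l)"

definition has_invariant_line :: "complex^2^2^'n \<Rightarrow> bool" where
  "has_invariant_line A \<longleftrightarrow>
     (\<exists>W :: (complex^2) set. vec.subspace W \<and> W \<noteq> {0} \<and> W \<noteq> UNIV \<and>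
        (\<forall>i. \<forall>v\<in>W. (A $ i) *v v \<in> W))"

end

theory Submission
  imports Defs
begin

text \<open>A tuple fails to be stable exactly when its components have a common eigenvector \<open>v\<close>.
  If they do, some \<open>P \<in> SL(2,\<complex>)\<close> moving \<open>v\<close> to \<open>e\<^sub>1\<close> makes the tuple upper triangular,
  and the elements \<open>diag(t, 1/t) P\<close> of \<open>SL(2,\<complex>)\<close> keep the orbit bounded while escaping to
  infinity as \<open>t \<rightarrow> 0\<close>. If they do not, the quadratic map \<open>h \<mapsto> (h A\<^sub>i adj h)\<^sub>i\<close>, which agrees
  with the orbit map on \<open>SL(2,\<complex>)\<close>, has no zero on the unit sphere; by compactness and
  homogeneity \<open>|g \<cdot> A| \<ge> m |g|\<^sup>2\<close> with \<open>m > 0\<close>, so preimages of compact sets are bounded.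

  The invariants \<open>\<sigma>\<close> and \<open>\<Delta>\<close> are conjugation invariant and vanish on upper triangular
  tuples. Conversely, if they all vanish, triangularising a non-scalar \<open>A\<^sub>j\<close> and reading
  \<open>\<sigma>\<^sub>j\<^sub>k\<close>, \<open>\<Delta>\<^sub>j\<^sub>k\<^sub>l\<close> in that normal form yields a common eigenvector. So stability is
  witnessed by a single nonzero \<open>\<sigma>\<^sub>j\<^sub>k\<close> or \<open>\<Delta>\<^sub>j\<^sub>k\<^sub>l\<close>, which only involves three components.\<close>

section \<open>Inverses and conjugates of square matrices\<close>

lemma matrix_inv_unique:
  fixes A B :: "'a::field^'n^'n"
  assumes "A ** B = mat 1"
  shows "matrix_inv A = B"
  unfolding matrix_inv_def
proof (rule some_equality)
  show "A ** B = mat 1 \<and> B ** A = mat 1"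
    using assms matrix_left_right_inverse by blast
  fix B' assume "A ** B' = mat 1 \<and> B' ** A = mat 1"
  then show "B' = B"
    by (metis assms matrix_mul_assoc matrix_mul_lid matrix_mul_rid)
qed

lemma matrix_inv_right:
  fixes A :: "'a::field^'n^'n"
  shows "invertible A \<Longrightarrow> A ** matrix_inv A = mat 1"
  by (metis invertible_right_inverse matrix_inv_unique)

lemma matrix_inv_left:
  fixes A :: "'a::field^'n^'n"
  shows "invertible A \<Longrightarrow> matrix_inv A ** A = mat 1"
  by (metis matrix_inv_right matrix_left_right_inverse)

lemma invertible_matrix_inv:
  fixes P :: "'a::field^'n^'n"
  shows "invertible P \<Longrightarrow> invertible (matrix_inv P)"
  using invertible_def matrix_inv_left matrix_inv_right by blast

lemma matrix_inv_cancel: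
  fixes P :: "'a::field^'n^'n"
  assumes "invertible P"
  shows "X ** matrix_inv P ** P = X" "X ** P ** matrix_inv P = X"
    "matrix_inv P *v (P *v x) = x" "P *v (matrix_inv P *v x) = x"
  using matrix_inv_left[OF assms] matrix_inv_right[OF assms]
  by (simp_all add: matrix_mul_rid matrix_vector_mul_assoc flip: matrix_mul_assoc)

lemma mat_mult_commute:
  fixes X :: "'a::comm_semiring_1^'n^'n"
  shows "mat c ** X = X ** mat c"
  by (simp add: vec_eq_iff matrix_matrix_mult_def mat_def if_distrib if_distribR
      mult.commute cong: if_cong)

lemma trace_conj:
  fixes P M :: "'a::field^'n^'n"
  assumes "invertible P"
  shows "trace (P ** M ** matrix_inv P) = trace M"
proof -
  have "trace (P ** M ** matrix_inv P) = trace (matrix_inv P ** (P ** M))"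
    by (rule trace_mul_sym)
  also have "\<dots> = trace M"
    using assms by (simp add: matrix_mul_assoc matrix_inv_left matrix_mul_lid)
  finally show ?thesis .
qed

lemma mult_conj:
  fixes P M N :: "'a::field^'n^'n"
  assumes "invertible P"
  shows "(P ** M ** matrix_inv P) ** (P ** N ** matrix_inv P) = P ** (M ** N) ** matrix_inv P"
  using assms by (simp add: matrix_mul_assoc matrix_inv_cancel)

lemma conj_eq_mat_iff:
  fixes P M :: "'a::field^'n^'n"
  assumes "invertible P"
  shows "P ** M ** matrix_inv P = mat c \<longleftrightarrow> M = mat c"
proof
  assume conj: "P ** M ** matrix_inv P = mat c"
  have "M = matrix_inv P ** (P ** M ** matrix_inv P) ** P"
    using assms by (simp add: matrix_mul_assoc matrix_inv_cancel matrix_inv_left matrix_mul_lid)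
  also have "\<dots> = mat c"
    using assms by (metis conj mat_mult_commute matrix_inv_cancel(1))
  finally show "M = mat c" .
qed (use assms in \<open>metis mat_mult_commute matrix_inv_cancel(2)\<close>)

lemma eigenvector_conj:
  fixes P M :: "'a::field^'n^'n"
  assumes "invertible P" "M *v v = \<mu> *s v"
  shows "(P ** M ** matrix_inv P) *v (P *v v) = \<mu> *s (P *v v)"
proof -
  have "(P ** M ** matrix_inv P) *v (P *v v) = P *v (M *v v)"
    using assms(1) by (simp add: matrix_inv_cancel matrix_vector_mul_assoc)
  then show ?thesis
    by (simp add: assms(2) vector_scalar_commute)
qed

section \<open>Vectors and matrices of size two\<close>

lemma vec2_eq_iff: "(x::'a^2) = y \<longleftrightarrow> x$1 = y$1 \<and> x$2 = y$2"
  by (simp add: vec_eq_iff forall_2)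

lemma vec2_nonzero_iff: "(x::'a::zero^2) \<noteq> 0 \<longleftrightarrow> x$1 \<noteq> 0 \<or> x$2 \<noteq> 0"
  by (auto simp: vec2_eq_iff)

lemmas matrix2_entry_simps =
  matrix_matrix_mult_def matrix_vector_mult_def mat_def trace_def sum_2 det_2

definition cross2 :: "complex^2 \<Rightarrow> complex^2 \<Rightarrow> complex" where
  "cross2 v w = v$1 * w$2 - v$2 * w$1"

lemma cross2_eq_0_iff:
  assumes "v \<noteq> 0"
  shows "cross2 v w = 0 \<longleftrightarrow> (\<exists>\<mu>. w = \<mu> *s v)"
proof
  assume w: "cross2 v w = 0"
  show "\<exists>\<mu>. w = \<mu> *s v"
  proof (cases "v$1 = 0")
    case True
    then have "v$2 \<noteq> 0" using assms by (simp add: vec2_nonzero_iff)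
    with True w show ?thesis
      by (intro exI[of _ "w$2 / v$2"]) (auto simp: vec2_eq_iff cross2_def field_simps)
  next
    case False
    with w show ?thesis
      by (intro exI[of _ "w$1 / v$1"]) (auto simp: vec2_eq_iff cross2_def field_simps)
  qed
qed (auto simp: cross2_def)

lemma exists_cross2_eq_1:
  assumes "v \<noteq> 0"
  obtains u where "cross2 v u = 1"
proof (cases "v$1 = 0")
  case True
  then have "v$2 \<noteq> 0" using assms by (simp add: vec2_nonzero_iff)
  then show ?thesis
    using True that[of "vector [- 1 / v$2, 0]"] by (simp add: cross2_def)
next
  case False
  then show ?thesis
    using that[of "vector [0, 1 / v$1]"] by (simp add: cross2_def)
qed

text \<open>Cramer's rule.\<close>
lemma cross2_decomposition:
  assumes "cross2 v w \<noteq> 0"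
  shows "x = (cross2 x w / cross2 v w) *s v + (cross2 v x / cross2 v w) *s w"
proof -
  have "x$1 * cross2 v w = cross2 x w * v$1 + cross2 v x * w$1"
       "x$2 * cross2 v w = cross2 x w * v$2 + cross2 v x * w$2"
    by (simp_all add: cross2_def algebra_simps)
  with assms show ?thesis
    by (simp add: vec2_eq_iff field_simps)
qed

lemma exists_eigenvector2:
  fixes M :: "complex^2^2"
  obtains v \<mu> where "v \<noteq> 0" "M *v v = \<mu> *s v"
proof -
  have "\<exists>v. v \<noteq> 0 \<and> cross2 v (M *v v) = 0"
  proof (cases "M$2$1 = 0")
    case True
    then show ?thesis
      by (intro exI[of _ "axis 1 1"])
        (simp add: cross2_def axis_def matrix_vector_mult_def sum_2 vec2_nonzero_iff)
  next
    case False
    define s where "s = csqrt ((M$1$1 + M$2$2)\<^sup>2 - 4 * det M)"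
    define r where "r = (M$1$1 + M$2$2 + s) / 2"
    have "s\<^sup>2 = (M$1$1 + M$2$2)\<^sup>2 - 4 * det M"
      by (simp add: s_def)
    then have root: "r\<^sup>2 - (M$1$1 + M$2$2) * r + det M = 0"
      unfolding r_def by (simp add: field_simps power2_eq_square, algebra)
    let ?v = "vector [r - M$2$2, M$2$1] :: complex^2"
    have "cross2 ?v (M *v ?v) = M$2$1 * (r\<^sup>2 - (M$1$1 + M$2$2) * r + det M)"
      by (simp add: cross2_def matrix_vector_mult_def sum_2 det_2 power2_eq_square algebra_simps)
    with False root show ?thesis
      by (intro exI[of _ ?v]) (simp add: vec2_nonzero_iff)
  qed
  then show ?thesis
    using that cross2_eq_0_iff by blast
qed

lemma exists_SL2_to_axis:
  fixes v :: "complex^2"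
  assumes "v \<noteq> 0"
  obtains P where "det P = 1" "P *v v = axis 1 1"
proof -
  obtain u where u: "cross2 v u = 1"
    using assms by (rule exists_cross2_eq_1)
  let ?P = "vector [vector [u$2, - u$1], vector [- v$2, v$1]] :: complex^2^2"
  have "det ?P = 1" using u by (simp add: det_2 cross2_def algebra_simps)
  moreover have "?P *v v = axis 1 1"
    using u
    by (simp add: cross2_def vec2_eq_iff matrix_vector_mult_def sum_2 axis_def algebra_simps)
  ultimately show ?thesis by (rule that)
qed

lemma triangularize_matrix2:
  fixes M :: "complex^2^2"
  obtains P where "det P = 1" "(P ** M ** matrix_inv P) $ 2 $ 1 = 0"
proof -
  obtain v \<mu> where v: "v \<noteq> 0" "M *v v = \<mu> *s v"
    by (rule exists_eigenvector2)
  then obtain P where P: "det P = 1" "P *v v = axis 1 1"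
    using exists_SL2_to_axis by blast
  then have "(P ** M ** matrix_inv P) *v axis 1 1 = \<mu> *s axis 1 1"
    using eigenvector_conj[of P M v \<mu>] v(2) by (simp add: invertible_det_nz)
  then have "((P ** M ** matrix_inv P) *v axis 1 1) $ 2 = 0"
    by (simp add: axis_def)
  with P(1) show ?thesis
    using that by (simp add: matrix_vector_mult_def sum_2 axis_def)
qed

text \<open>For \<open>2\<times>2\<close> matrices the adjugate \<open>[[d, -b], [-c, a]]\<close> is \<open>tr M \<cdot> I - M\<close>.\<close>
definition adj2 :: "complex^2^2 \<Rightarrow> complex^2^2" where
  "adj2 M = mat (trace M) - M"

lemma adj2_nth [simp]:
  "adj2 M $1$1 = M$2$2" "adj2 M $1$2 = - M$1$2" "adj2 M $2$1 = - M$2$1" "adj2 M $2$2 = M$1$1"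
  by (simp_all add: adj2_def mat_def trace_def sum_2)

lemma matrix_inv_SL2: "det g = 1 \<Longrightarrow> matrix_inv g = adj2 g"
  by (rule matrix_inv_unique)
     (simp add: vec2_eq_iff matrix2_entry_simps algebra_simps)

lemma continuous_on_adj2: "continuous_on S adj2"
proof -
  have adj2_eq: "adj2 = (\<lambda>M. (\<chi> i j. of_bool (i = j) * trace M) - M)"
    by (simp add: fun_eq_iff adj2_def mat_def)
  show ?thesis
    unfolding adj2_eq trace_def by (intro continuous_intros)
qed

section \<open>Common eigenvectors\<close>

definition common_eigenvector :: "complex^2^2^'n \<Rightarrow> complex^2 \<Rightarrow> bool" where
  "common_eigenvector A v \<longleftrightarrow> v \<noteq> 0 \<and> (\<forall>i. \<exists>\<mu>. A$i *v v = \<mu> *s v)"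

lemma common_eigenvector_cross2:
  "common_eigenvector A v \<longleftrightarrow> v \<noteq> 0 \<and> (\<forall>i. cross2 v (A$i *v v) = 0)"
  by (auto simp: common_eigenvector_def cross2_eq_0_iff)

lemma common_eigenvector_axis_iff:
  "common_eigenvector A (axis 1 1) \<longleftrightarrow> (\<forall>i. A$i$2$1 = 0)"
  by (simp add: common_eigenvector_cross2 cross2_def axis_def vec2_nonzero_iff
      matrix_vector_mult_def sum_2)

lemma has_invariant_line_iff_common_eigenvector:
  "has_invariant_line A \<longleftrightarrow> (\<exists>v. common_eigenvector A v)"
proof
  assume "has_invariant_line A"
  then obtain W where W: "vec.subspace W" "W \<noteq> {0}" "W \<noteq> UNIV"
    and inv: "\<And>i v. v \<in> W \<Longrightarrow> A$i *v v \<in> W"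
    unfolding has_invariant_line_def by blast
  obtain v where v: "v \<in> W" "v \<noteq> 0"
    using W(1,2) vec.subspace_0 by blast
  have "cross2 v (A$i *v v) = 0" for i
  proof (rule ccontr)
    assume nz: "cross2 v (A$i *v v) \<noteq> 0"
    have "x \<in> W" for x
      using cross2_decomposition[OF nz, of x] W(1) v(1) inv[OF v(1)]
      by (metis vec.subspace_add vec.subspace_scale)
    with W(3) show False by blast
  qed
  with v show "\<exists>v. common_eigenvector A v"
    by (auto simp: common_eigenvector_cross2)
next
  assume "\<exists>v. common_eigenvector A v"
  then obtain v where v: "common_eigenvector A v" ..
  then have "v \<noteq> 0" by (simp add: common_eigenvector_def)
  then obtain u where u: "cross2 v u = 1" by (rule exists_cross2_eq_1)
  have "u \<notin> vec.span {v}"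
    using u by (auto simp: vec.span_singleton cross2_def)
  moreover have "vec.span {v} \<noteq> {0}"
    using vec.span_base[of v "{v}"] \<open>v \<noteq> 0\<close> by auto
  moreover have "A$i *v x \<in> vec.span {v}" if x: "x \<in> vec.span {v}" for i x
  proof -
    obtain k where k: "x = k *s v" using x by (auto simp: vec.span_singleton)
    obtain \<mu> where "A$i *v v = \<mu> *s v" using v by (auto simp: common_eigenvector_def)
    then have "A$i *v x = (k * \<mu>) *s v" by (simp add: k vector_scalar_commute)
    then show ?thesis by (auto simp: vec.span_singleton)
  qed
  ultimately show "has_invariant_line A"
    unfolding has_invariant_line_def by blast
qed

lemma conj_act_nth [simp]: "conj_act g A $ i = g ** A$i ** matrix_inv g"
  by (simp add: conj_act_def)

lemma conj_act_mat_1 [simp]: "conj_act (mat 1) A = A"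
proof -
  have "matrix_inv (mat 1 :: complex^2^2) = mat 1"
    by (simp add: matrix_inv_unique matrix_mul_lid)
  then show ?thesis
    by (simp add: conj_act_def matrix_mul_lid matrix_mul_rid)
qed

lemma conj_act_mult:
  assumes "invertible g" "invertible h"
  shows "conj_act (g ** h) A = conj_act g (conj_act h A)"
proof -
  have "matrix_inv (g ** h) = matrix_inv h ** matrix_inv g"
    using assms
    by (intro matrix_inv_unique) (simp add: matrix_mul_assoc matrix_inv_cancel matrix_inv_right)
  then show ?thesis
    by (simp add: conj_act_def matrix_mul_assoc)
qed

lemma common_eigenvector_conj_act_imp:
  assumes P: "invertible P" and v: "common_eigenvector A v"
  shows "common_eigenvector (conj_act P A) (P *v v)"
proof -
  have "P *v v \<noteq> 0"
    using v matrix_inv_cancel(3)[OF P, of v] by (auto simp: common_eigenvector_def)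
  moreover have "\<exists>\<mu>. conj_act P A $ i *v (P *v v) = \<mu> *s (P *v v)" for i
    using v eigenvector_conj[OF P] unfolding common_eigenvector_def conj_act_nth by blast
  ultimately show ?thesis
    by (simp add: common_eigenvector_def)
qed

lemma common_eigenvector_conj_act:
  assumes P: "invertible P"
  shows "common_eigenvector (conj_act P A) (P *v v) \<longleftrightarrow> common_eigenvector A v"
proof
  assume "common_eigenvector (conj_act P A) (P *v v)"
  then have "common_eigenvector (conj_act (matrix_inv P) (conj_act P A))
      (matrix_inv P *v (P *v v))"
    using P by (simp add: common_eigenvector_conj_act_imp invertible_matrix_inv)
  then show "common_eigenvector A v"
    using P by (simp add: invertible_matrix_inv matrix_inv_left matrix_vector_mul_assoc
        flip: conj_act_mult)
qed (rule common_eigenvector_conj_act_imp[OF P])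

lemma triangularize_common_eigenvector:
  assumes "common_eigenvector A v"
  obtains P where "det P = 1" "\<And>i. conj_act P A $ i $ 2 $ 1 = 0"
proof -
  have "v \<noteq> 0"
    using assms by (simp add: common_eigenvector_def)
  then obtain P where P: "det P = 1" "P *v v = axis 1 1"
    by (rule exists_SL2_to_axis)
  then have "invertible P" by (simp add: invertible_det_nz)
  with assms P(2) have "common_eigenvector (conj_act P A) (axis 1 1)"
    by (metis common_eigenvector_conj_act)
  with P(1) show ?thesis
    using that by (simp add: common_eigenvector_axis_iff)
qed

lemma similar_to_upper_triangular_iff_common_eigenvector:
  "similar_to_upper_triangular A \<longleftrightarrow> (\<exists>v. common_eigenvector A v)"
proof
  assume "similar_to_upper_triangular A"
  then obtain P where P: "invertible P" "\<And>i. conj_act P A $ i $ 2 $ 1 = 0"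
    by (auto simp: similar_to_upper_triangular_def upper_triangular2_def)
  then have "common_eigenvector (conj_act P A) (P *v (matrix_inv P *v axis 1 1))"
    by (simp add: common_eigenvector_axis_iff matrix_vector_mul_assoc matrix_inv_right)
  with P(1) show "\<exists>v. common_eigenvector A v"
    by (auto simp: common_eigenvector_conj_act)
next
  assume "\<exists>v. common_eigenvector A v"
  then obtain P where P: "det P = 1" "\<And>i. conj_act P A $ i $ 2 $ 1 = 0"
    using triangularize_common_eigenvector by blast
  then show "similar_to_upper_triangular A"
    unfolding similar_to_upper_triangular_def upper_triangular2_def
    by (intro exI[of _ P]) (simp add: invertible_det_nz)
qed

section \<open>The invariants \<open>\<sigma>\<close> and \<open>\<Delta>\<close>\<close>

lemmas invariant_defs = sigma_def tau_def Delta_def t1_def t2_def t3_def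

lemma
  assumes "invertible P"
  shows sigma_conj_act: "sigma (conj_act P A) j k = sigma A j k"
    and Delta_conj_act: "Delta (conj_act P A) j k l = Delta A j k l"
  using assms
  by (simp_all add: invariant_defs trace_conj mult_conj)

lemma invariants_upper_triangular:
  assumes "\<And>i. B$i$2$1 = 0"
  shows "sigma B j k = 0" "Delta B j k l = 0"
  using assms by (simp_all add: invariant_defs matrix2_entry_simps power2_eq_square field_simps)

lemma invariants_vanish_if_common_eigenvector:
  assumes "common_eigenvector A v"
  shows "sigma A j k = 0" "Delta A j k l = 0"
proof -
  obtain P where P: "det P = 1" "\<And>i. conj_act P A $ i $ 2 $ 1 = 0"
    using triangularize_common_eigenvector[OF assms] by blast
  then have "invertible P" by (simp add: invertible_det_nz)
  with P(2) show "sigma A j k = 0" "Delta A j k l = 0"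
    by (metis invariants_upper_triangular sigma_conj_act Delta_conj_act)+
qed

text \<open>In the next lemmas \<open>B\<^sub>j = [[a, b], [0, d]]\<close>; the vector \<open>(b, d - a)\<close> is an eigenvector
  of \<open>B\<^sub>j\<close> for the eigenvalue \<open>d\<close>, while \<open>e\<^sub>1\<close> is one for \<open>a\<close>.\<close>
lemma sigma_triangular_normal_form:
  assumes "B$j$2$1 = 0"
  defines "w \<equiv> vector [B$j$1$2, B$j$2$2 - B$j$1$1]"
  shows "sigma B j k = B$k$2$1 * cross2 w (B$k *v w)"
  using assms
  by (simp add: invariant_defs matrix2_entry_simps cross2_def power2_eq_square field_simps)

lemma Delta_triangular_normal_form:
  assumes "B$j$2$1 = 0" "B$k$2$1 = 0"
  defines "w \<equiv> vector [B$j$1$2, B$j$2$2 - B$j$1$1]"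
  shows "(B$j$1$1 - B$j$2$2) * (t3 B j k l - t3 B l k j) = - B$l$2$1 * cross2 w (B$k *v w)"
  using assms by (simp add: invariant_defs matrix2_entry_simps cross2_def algebra_simps)

lemma tau_triangular_normal_form:
  assumes "B$j$2$1 = 0"
  shows "tau B j j = (B$j$1$1 - B$j$2$2)\<^sup>2 / 2"
    and "B$j$1$1 = B$j$2$2 \<Longrightarrow> tau B j k = B$j$1$2 * B$k$2$1"
  using assms by (simp_all add: invariant_defs matrix2_entry_simps power2_eq_square field_simps)

text \<open>\<open>\<sigma>\<^sub>j\<^sub>k = 0\<close> says that \<open>B\<^sub>k\<close> preserves one of the eigenlines \<open>e\<^sub>1\<close>, \<open>w\<close> of \<open>B\<^sub>j\<close>,
  and \<open>\<Delta>\<^sub>j\<^sub>k\<^sub>l \<noteq> 0\<close> as soon as \<open>B\<^sub>k\<close> moves \<open>w\<close> while \<open>B\<^sub>l\<close> moves \<open>e\<^sub>1\<close>.\<close>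
lemma common_eigenvector_if_distinct_eigenvalues:
  assumes Bj: "B$j$2$1 = 0" and ad: "B$j$1$1 \<noteq> B$j$2$2"
    and sigma: "\<And>k. sigma B j k = 0" and Delta: "\<And>k l. Delta B j k l = 0"
  shows "\<exists>v. common_eigenvector B v"
proof (cases "\<forall>l. B$l$2$1 = 0")
  case True
  then show ?thesis
    using common_eigenvector_axis_iff by blast
next
  case False
  then obtain l where l: "B$l$2$1 \<noteq> 0" by blast
  define w where "w = (vector [B$j$1$2, B$j$2$2 - B$j$1$1] :: complex^2)"
  have "cross2 w (B$k *v w) = 0" for k
  proof (rule ccontr)
    assume moved: "cross2 w (B$k *v w) \<noteq> 0"
    then have "B$k$2$1 = 0"
      using sigma_triangular_normal_form[OF Bj, of k] sigma[of k] by (simp add: w_def)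
    then have "t3 B j k l - t3 B l k j \<noteq> 0"
      using Delta_triangular_normal_form[OF Bj, of k l] moved l by (auto simp: w_def)
    with Delta[of k l] show False
      by (simp add: Delta_def)
  qed
  moreover have "w \<noteq> 0"
    using ad by (simp add: w_def vec2_nonzero_iff)
  ultimately show ?thesis
    by (auto simp: common_eigenvector_cross2)
qed

lemma common_eigenvector_triangular_form:
  assumes Bj: "B$j$2$1 = 0" and nonscalar: "\<And>c. B$j \<noteq> mat c"
    and sigma: "\<And>i k. sigma B i k = 0" and Delta: "\<And>i k l. Delta B i k l = 0"
  shows "\<exists>v. common_eigenvector B v"
proof (cases "B$j$1$1 = B$j$2$2")
  case True
  have "B$j$1$2 \<noteq> 0"
    using nonscalar[of "B$j$1$1"] Bj True by (auto simp: vec2_eq_iff mat_def)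
  moreover have "tau B j k = 0" for k
    using sigma[of j k] tau_triangular_normal_form(1)[OF Bj] True by (simp add: sigma_def)
  ultimately have "\<forall>k. B$k$2$1 = 0"
    using tau_triangular_normal_form(2)[OF Bj True] by simp
  then show ?thesis
    using common_eigenvector_axis_iff by blast
next
  case False
  then show ?thesis
    using common_eigenvector_if_distinct_eigenvalues[OF Bj] sigma Delta by blast
qed

lemma common_eigenvector_if_invariants_vanish:
  assumes sigma: "\<And>j k. sigma A j k = 0" and Delta: "\<And>j k l. Delta A j k l = 0"
  shows "\<exists>v. common_eigenvector A v"
proof (cases "\<forall>j. \<exists>c. A$j = mat c")
  case True
  have "A$j$2$1 = 0" for j
  proof -
    obtain c where "A$j = mat c" using True by blast
    then show ?thesis by (simp add: mat_def)
  qed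
  then show ?thesis
    using common_eigenvector_axis_iff by blast
next
  case False
  then obtain j where nonscalar: "\<And>c. A$j \<noteq> mat c" by blast
  obtain P where P: "det P = 1" "(P ** A$j ** matrix_inv P) $ 2 $ 1 = 0"
    by (rule triangularize_matrix2)
  then have inv: "invertible P" by (simp add: invertible_det_nz)
  have "\<exists>v. common_eigenvector (conj_act P A) v"
  proof (rule common_eigenvector_triangular_form)
    show "conj_act P A $ j $ 2 $ 1 = 0" using P(2) by simp
    show "conj_act P A $ j \<noteq> mat c" for c
      using nonscalar[of c] conj_eq_mat_iff[OF inv] by simp
  qed (use sigma Delta inv in \<open>simp_all add: sigma_conj_act Delta_conj_act\<close>)
  then obtain w where "common_eigenvector (conj_act P A) (P *v (matrix_inv P *v w))"
    using inv by (auto simp: matrix_inv_cancel)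
  with inv show ?thesis
    by (auto simp: common_eigenvector_conj_act)
qed

section \<open>Stability\<close>

lemma proper_map_euclidean_iff:
  fixes f :: "'a::metric_space \<Rightarrow> 'b::metric_space"
  shows "proper_map (top_of_set S) euclidean f \<longleftrightarrow> (\<forall>K. compact K \<longrightarrow> compact {x \<in> S. f x \<in> K})"
proof -
  have "kc_space (top_of_set S)" "kc_space (euclidean :: 'b topology)"
    by (simp_all add: Hausdorff_imp_kc_space kc_space_subtopology)
  then show ?thesis
    using proper_eq_compact_map[of euclidean "top_of_set S" f] k_space_euclideanreal
    by (simp add: compactin_subtopology)
qed

lemma closed_SL2: "closed SL2"
proof -
  have "SL2 = {g::complex^2^2. g$1$1 * g$2$2 - g$1$2 * g$2$1 = 1}"
    by (simp add: SL2_def det_2)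
  also have "closed \<dots>"
    by (intro closed_Collect_eq continuous_intros)
  finally show ?thesis .
qed

definition adj_conj :: "complex^2^2 \<Rightarrow> complex^2^2^'n \<Rightarrow> complex^2^2^'n" where
  "adj_conj h A = (\<chi> i. h ** A$i ** adj2 h)"

lemma conj_act_SL2: "g \<in> SL2 \<Longrightarrow> conj_act g A = adj_conj g A"
  by (simp add: SL2_def conj_act_def adj_conj_def matrix_inv_SL2)

lemma adj_conj_scaleR: "adj_conj (c *\<^sub>R h) A = c\<^sup>2 *\<^sub>R adj_conj h A"
  by (simp add: adj_conj_def vec_eq_iff forall_2 matrix_matrix_mult_def sum_2)
     (simp add: scaleR_conv_of_real power2_eq_square algebra_simps)

lemma continuous_on_adj_conj: "continuous_on S (\<lambda>h. adj_conj h A)"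
  unfolding adj_conj_def matrix_matrix_mult_def
  by (intro continuous_intros continuous_on_compose2[OF continuous_on_adj2]) auto

lemma common_eigenvector_if_adj_conj_eq_0:
  assumes h: "h \<noteq> 0" and zero: "adj_conj h A = 0"
  shows "\<exists>v. common_eigenvector A v"
proof -
  have row1: "cross2 (vector [h$1$2, - h$1$1]) (M *v vector [h$1$2, - h$1$1])
      = - (h ** M ** adj2 h)$1$2"
    and row2: "cross2 (vector [h$2$2, - h$2$1]) (M *v vector [h$2$2, - h$2$1])
      = (h ** M ** adj2 h)$2$1"
    for M
    by (simp_all add: cross2_def matrix_matrix_mult_def matrix_vector_mult_def sum_2 algebra_simps)
  have zero_i: "h ** A$i ** adj2 h = 0" for i
    using zero by (simp add: adj_conj_def vec_eq_iff)
  consider "h$1 \<noteq> 0" | "h$2 \<noteq> 0"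
    using h vec2_nonzero_iff by blast
  then show ?thesis
  proof cases
    case 1
    then show ?thesis
      using row1 zero_i
      by (intro exI[of _ "vector [h$1$2, - h$1$1]"])
        (auto simp: common_eigenvector_cross2 vec2_nonzero_iff)
  next
    case 2
    then show ?thesis
      using row2 zero_i
      by (intro exI[of _ "vector [h$2$2, - h$2$1]"])
        (auto simp: common_eigenvector_cross2 vec2_nonzero_iff)
  qed
qed

lemma SL2_orbit_coercive:
  assumes irreducible: "\<not> (\<exists>v. common_eigenvector A v)"
  obtains m where "m > 0" "\<And>g. g \<in> SL2 \<Longrightarrow> m * (norm g)\<^sup>2 \<le> norm (conj_act g A)"
proof -
  have "continuous_on (sphere 0 1) (\<lambda>h. norm (adj_conj h A))"
    by (intro continuous_on_norm continuous_on_adj_conj)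
  moreover have "sphere (0::complex^2^2) 1 \<noteq> {}" by simp
  ultimately obtain h0 where h0: "h0 \<in> sphere 0 1"
    and min: "\<And>h. h \<in> sphere 0 1 \<Longrightarrow> norm (adj_conj h0 A) \<le> norm (adj_conj h A)"
    using continuous_attains_inf[OF compact_sphere] by blast
  have "h0 \<noteq> 0"
    using h0 by auto
  then have pos: "norm (adj_conj h0 A) > 0"
    using irreducible common_eigenvector_if_adj_conj_eq_0 by auto
  have "norm (adj_conj h0 A) * (norm g)\<^sup>2 \<le> norm (conj_act g A)" if g: "g \<in> SL2" for g
  proof -
    have "g \<noteq> 0" using g by (auto simp: SL2_def det_2)
    define h where "h = (1 / norm g) *\<^sub>R g"
    have "h \<in> sphere 0 1" "g = norm g *\<^sub>R h"
      using \<open>g \<noteq> 0\<close> by (simp_all add: h_def)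
    then have "norm (conj_act g A) = (norm g)\<^sup>2 * norm (adj_conj h A)"
      by (metis g conj_act_SL2 adj_conj_scaleR norm_scaleR abs_power2)
    with mult_right_mono[OF min[OF \<open>h \<in> sphere 0 1\<close>], of "(norm g)\<^sup>2"] show ?thesis
      by (simp add: mult.commute)
  qed
  with pos show ?thesis by (rule that)
qed

lemma stable_if_no_common_eigenvector:
  fixes A :: "complex^2^2^'n"
  assumes "\<not> (\<exists>v. common_eigenvector A v)"
  shows "stable A"
  unfolding stable_def proper_map_euclidean_iff
proof (intro allI impI)
  fix K :: "(complex^2^2^'n) set"
  assume K: "compact K"
  obtain m where m: "m > 0" "\<And>g. g \<in> SL2 \<Longrightarrow> m * (norm g)\<^sup>2 \<le> norm (conj_act g A)"
    using SL2_orbit_coercive[OF assms] by blast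
  obtain R where R: "\<And>x. x \<in> K \<Longrightarrow> norm x \<le> R"
    using K compact_imp_bounded bounded_iff by metis
  have "continuous_on SL2 (\<lambda>g. conj_act g A)"
    using continuous_on_adj_conj by (rule continuous_on_eq) (simp add: conj_act_SL2)
  then have "closed {g \<in> SL2. conj_act g A \<in> K}"
    using continuous_closed_preimage[OF _ closed_SL2 compact_imp_closed[OF K]]
    by (simp add: vimage_def Int_def)
  moreover have "norm g \<le> 1 + R / m" if "g \<in> SL2" "conj_act g A \<in> K" for g
  proof -
    have "m * (norm g)\<^sup>2 \<le> R"
      using m(2) R that by (meson order_trans)
    then have "(norm g)\<^sup>2 \<le> R / m"
      using m(1) by (simp add: pos_le_divide_eq mult.commute)
    moreover have "norm g \<le> 1 + (norm g)\<^sup>2"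
      using zero_le_power2[of "norm g - 1/2"] unfolding power2_diff by (simp add: power2_eq_square)
    ultimately show ?thesis by simp
  qed
  then have "bounded {g \<in> SL2. conj_act g A \<in> K}"
    by (auto simp: bounded_iff)
  ultimately show "compact {g \<in> SL2. conj_act g A \<in> K}"
    by (simp add: compact_eq_bounded_closed)
qed

definition diag2 :: "real \<Rightarrow> complex^2^2" where
  "diag2 t = vector [vector [complex_of_real t, 0], vector [0, 1 / complex_of_real t]]"

lemma det_diag2: "t \<noteq> 0 \<Longrightarrow> det (diag2 t) = 1"
  by (simp add: diag2_def det_2)

lemma norm_conj_act_diag2_le:
  assumes t: "0 < t" "t \<le> 1" and upper: "\<And>i. B$i$2$1 = 0"
  shows "norm (conj_act (diag2 t) B) \<le> norm B"
proof -
  have "matrix_inv (diag2 t) =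
      vector [vector [1 / complex_of_real t, 0], vector [0, complex_of_real t]]"
    using t by (simp add: diag2_def matrix_inv_SL2 det_2 vec2_eq_iff)
  then have entries: "conj_act (diag2 t) B $ i $ 1 $ 1 = B$i$1$1"
      "conj_act (diag2 t) B $ i $ 1 $ 2 = complex_of_real (t\<^sup>2) * B$i$1$2"
      "conj_act (diag2 t) B $ i $ 2 $ 1 = B$i$2$1"
      "conj_act (diag2 t) B $ i $ 2 $ 2 = B$i$2$2" for i
    using t upper[of i] by (simp_all add: diag2_def matrix_matrix_mult_def sum_2 power2_eq_square)
  have "norm (complex_of_real (t\<^sup>2) * z) \<le> norm z" for z
    using t by (simp add: norm_mult norm_power mult_left_le_one_le power_le_one)
  then have "norm (conj_act (diag2 t) B $ i $ r $ s) \<le> norm (B $ i $ r $ s)" for i r s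
    using exhaust_2[of r] exhaust_2[of s] entries by auto
  then show ?thesis
    by (intro norm_le_componentwise_cart)
qed

lemma norm_diag2_mult_ge:
  assumes "0 < t"
  shows "norm (P$2$s) / t \<le> norm (diag2 t ** P)"
proof -
  have "(diag2 t ** P) $ 2 $ s = P$2$s / complex_of_real t"
    by (simp add: diag2_def matrix_matrix_mult_def sum_2)
  then show ?thesis
    using Finite_Cartesian_Product.norm_nth_le[of "diag2 t ** P" 2]
      Finite_Cartesian_Product.norm_nth_le[of "(diag2 t ** P) $ 2" s] assms
    by (simp add: norm_divide)
qed

lemma bounded_orbit_preimage_if_stable:
  "stable A \<Longrightarrow> bounded {g \<in> SL2. conj_act g A \<in> cball 0 r}"
  using compact_cball compact_imp_bounded unfolding stable_def proper_map_euclidean_iff by blast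

lemma not_stable_if_common_eigenvector:
  assumes "common_eigenvector A v"
  shows "\<not> stable A"
proof
  assume "stable A"
  obtain P where P: "det P = 1" "\<And>i. conj_act P A $ i $ 2 $ 1 = 0"
    using triangularize_common_eigenvector[OF assms] by blast
  define r where "r = norm (conj_act P A)"
  obtain R where R: "\<And>g. g \<in> SL2 \<Longrightarrow> conj_act g A \<in> cball 0 r \<Longrightarrow> norm g \<le> R"
    using bounded_orbit_preimage_if_stable[OF \<open>stable A\<close>, of r] by (auto simp: bounded_iff)
  have orbit: "norm (diag2 t ** P) \<le> R" if t: "0 < t" "t \<le> 1" for t
  proof (rule R)
    show "diag2 t ** P \<in> SL2"
      using t by (simp add: SL2_def det_mul det_diag2 P(1))
    have "conj_act (diag2 t ** P) A = conj_act (diag2 t) (conj_act P A)"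
      using t P(1) by (simp add: conj_act_mult invertible_det_nz det_diag2)
    then show "conj_act (diag2 t ** P) A \<in> cball 0 r"
      using norm_conj_act_diag2_le[OF t P(2)] by (simp add: r_def)
  qed
  have "P$2$1 \<noteq> 0 \<or> P$2$2 \<noteq> 0"
    using P(1) by (auto simp: det_2)
  then obtain s where "P$2$s \<noteq> 0" by blast
  define c where "c = norm (P$2$s)"
  with \<open>P$2$s \<noteq> 0\<close> have "c > 0" by simp
  define t where "t = c / (\<bar>R\<bar> + 1 + c)"
  have t: "0 < t" "t \<le> 1"
    using \<open>c > 0\<close> by (simp_all add: t_def)
  have "\<bar>R\<bar> + 1 + c = c / t"
    using \<open>c > 0\<close> by (simp add: t_def)
  also have "\<dots> \<le> R"
    using norm_diag2_mult_ge[OF t(1), of P s] orbit[OF t] by (simp add: c_def)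
  finally show False
    using abs_ge_self[of R] \<open>c > 0\<close> by linarith
qed

lemma stable_iff_no_common_eigenvector:
  "stable A \<longleftrightarrow> \<not> (\<exists>v. common_eigenvector A v)"
  using stable_if_no_common_eigenvector not_stable_if_common_eigenvector by blast

lemma stable_iff_invariants:
  "stable A \<longleftrightarrow> (\<exists>j k l. sigma A j k \<noteq> 0 \<or> Delta A j k l \<noteq> 0)"
proof
  assume "stable A"
  then show "\<exists>j k l. sigma A j k \<noteq> 0 \<or> Delta A j k l \<noteq> 0"
    using common_eigenvector_if_invariants_vanish[of A]
    unfolding stable_iff_no_common_eigenvector by blast
next
  assume "\<exists>j k l. sigma A j k \<noteq> 0 \<or> Delta A j k l \<noteq> 0"
  then show "stable A"
    using invariants_vanish_if_common_eigenvector
    unfolding stable_iff_no_common_eigenvector by blast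
qed

lemma triple_nth [simp]:
  "triple A j k l $ 1 = A$j" "triple A j k l $ 2 = A$k" "triple A j k l $ 3 = A$l"
  by (simp_all add: triple_def)

lemma
  shows sigma_triple: "sigma (triple A j k l) 1 2 = sigma A j k"
    and Delta_triple: "Delta (triple A j k l) 1 2 3 = Delta A j k l"
  by (simp_all add: invariant_defs)

lemma common_eigenvector_triple:
  "common_eigenvector A v \<Longrightarrow> common_eigenvector (triple A j k l) v"
  by (simp add: common_eigenvector_def triple_def)

lemma stable_iff_stable_triple:
  "stable A \<longleftrightarrow> (\<exists>j k l. stable (triple A j k l))"
proof
  assume "stable A"
  then obtain j k l where "sigma A j k \<noteq> 0 \<or> Delta A j k l \<noteq> 0"
    by (auto simp: stable_iff_invariants)
  then have "stable (triple A j k l)"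
    unfolding stable_iff_invariants
    by (intro exI[of _ 1] exI[of _ 2] exI[of _ 3]) (simp add: sigma_triple Delta_triple)
  then show "\<exists>j k l. stable (triple A j k l)" by blast
next
  assume "\<exists>j k l. stable (triple A j k l)"
  then show "stable A"
    using common_eigenvector_triple unfolding stable_iff_no_common_eigenvector by blast
qed

theorem theorem3p3:
  fixes A :: "complex^2^2^'n"
  shows "(stable A \<longleftrightarrow> (\<exists>j k l. stable (triple A j k l)))
       \<and> (stable A \<longleftrightarrow> (\<exists>j k l. sigma A j k \<noteq> 0 \<or> Delta A j k l \<noteq> 0))
       \<and> (stable A \<longleftrightarrow> \<not> similar_to_upper_triangular A)
       \<and> (stable A \<longleftrightarrow> \<not> has_invariant_line A)"
proof (intro conjI)
  show "stable A \<longleftrightarrow> \<not> similar_to_upper_triangular A"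
    by (simp add: stable_iff_no_common_eigenvector
        similar_to_upper_triangular_iff_common_eigenvector)
  show "stable A \<longleftrightarrow> \<not> has_invariant_line A"
    by (simp add: stable_iff_no_common_eigenvector has_invariant_line_iff_common_eigenvector)
qed (rule stable_iff_stable_triple stable_iff_invariants)+

end
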